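(* Under the hypotheses of the following setting: $K=\begin{bmatrix} A & B^T\\ B & -C\end{bmatrix}$ with $A\in\mathbb{R}^{m\times m}$ symmetric positive definite, $B\in\mathbb{R}^{n\times m}$ of rank $n$, $C\in\mathbb{R}^{n\times n}$ symmetric positive semidefinite, $K=LJ_{m+n}L^T$ a generalized Cholesky factorization, and $\Delta K$ symmetric with $\|L^{-1}\|_2^2\|\Delta K\|_F<\tfrac12$, there is a generalized Cholesky factorization $K+\Delta K=(L+\Delta L)J_{m+n}(L+\Delta L)^T$ such that $$\|L^{-1}\Delta L\|_F\le \frac{1}{\sqrt2}\left(1-\sqrt{1-2\|L^{-1}\|_2^2\|\Delta K\|_F}\right).$$
   Context: $J_{m+n}=\begin{bmatrix} I_m&0\\0&-I_n\end{bmatrix}$. A generalized Cholesky factorization of $M\in\mathbb{R}^{(m+n)\times(m+n)}$ is $M=LJ_{m+n}L^T$ with $L=\begin{bmatrix}L_{11}&0\\L_{21}&L_{22}\end{bmatrix}$, $L_{11}\in\mathbb{R}^{m\times m}$, $L_{22}\in\mathbb{R}^{n\times n}$ nonsingular lower triangular, $L_{21}\in\mathbb{R}^{n\times m}$. $\|\cdot\|_2$ is the spectral norm and $\|\cdot\|_F$ the Frobenius norm. *)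

theory Defs
  imports "HOL-Analysis.Analysis" "Jordan_Normal_Form.DL_Rank" "Jordan_Normal_Form.Matrix"
begin

definition Jsig :: "nat \<Rightarrow> nat \<Rightarrow> real mat" where
  "Jsig m n = four_block_mat (1\<^sub>m m) (0\<^sub>m m n) (0\<^sub>m n m) (- (1\<^sub>m n))"

definition lower_tri :: "real mat \<Rightarrow> bool" where
  "lower_tri A \<longleftrightarrow> (\<forall>i < dim_row A. \<forall>j < dim_col A. i < j \<longrightarrow> A $$ (i,j) = 0)"

definition sym_mat :: "real mat \<Rightarrow> bool" where
  "sym_mat A \<longleftrightarrow> square_mat A \<and> transpose_mat A = A"

definition pos_def_mat :: "real mat \<Rightarrow> bool" where
  "pos_def_mat A \<longleftrightarrow> sym_mat A \<and>
     (\<forall>x \<in> carrier_vec (dim_row A). x \<noteq> 0\<^sub>v (dim_row A) \<longrightarrow> x \<bullet> (A *\<^sub>v x) > 0)"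

definition pos_semidef_mat :: "real mat \<Rightarrow> bool" where
  "pos_semidef_mat A \<longleftrightarrow> sym_mat A \<and>
     (\<forall>x \<in> carrier_vec (dim_row A). x \<bullet> (A *\<^sub>v x) \<ge> 0)"

definition mat_rank :: "real mat \<Rightarrow> nat" where
  "mat_rank A = vec_space.rank (dim_row A) A"

definition mat_inv :: "real mat \<Rightarrow> real mat" where
  "mat_inv A = (SOME B. B \<in> carrier_mat (dim_row A) (dim_row A) \<and>
                   A * B = 1\<^sub>m (dim_row A) \<and> B * A = 1\<^sub>m (dim_row A))"

definition vnorm2 :: "real vec \<Rightarrow> real" where
  "vnorm2 x = sqrt (x \<bullet> x)"

definition spec_norm :: "real mat \<Rightarrow> real" where
  "spec_norm A = Sup {vnorm2 (A *\<^sub>v x) | x. x \<in> carrier_vec (dim_col A) \<and> vnorm2 x = 1}"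

definition frob_norm :: "real mat \<Rightarrow> real" where
  "frob_norm A = sqrt (\<Sum>i<dim_row A. \<Sum>j<dim_col A. (A $$ (i,j))\<^sup>2)"

definition gen_cholesky :: "nat \<Rightarrow> nat \<Rightarrow> real mat \<Rightarrow> real mat \<Rightarrow> bool" where
  "gen_cholesky m n M L \<longleftrightarrow>
     L \<in> carrier_mat (m+n) (m+n) \<and> lower_tri L \<and>
     invertible_mat (mat m m (\<lambda>(i,j). L $$ (i,j))) \<and>
     invertible_mat (mat n n (\<lambda>(i,j). L $$ (m+i, m+j))) \<and>
     M = L * Jsig m n * transpose_mat L"

end

theory Submission
  imports Defs
begin

text \<open>Write J = Jsig m n and look for the new factor in the form L + \<Delta>L = L (I + X J). Then
  (L + \<Delta>L) J (L + \<Delta>L)^T = K + \<Delta>K becomes X + X^T + X J X^T = E with E = L^-1 \<Delta>K L^-T, and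
  L (I + X J) is again a generalized Cholesky factor as soon as X is lower triangular with
  |X_ii| < 1. For lower triangular X the equation is the fixed-point problem X = low(E - X J X^T),
  where low keeps the strictly lower triangle and half of the diagonal. As
  ||low S||_F \<le> ||S||_F / sqrt 2 for symmetric S and ||E||_F \<le> \<epsilon> = ||L^-1||_2^2 ||\<Delta>K||_F, this map
  sends the Frobenius ball of radius \<rho> = (1 - sqrt (1 - 2 \<epsilon>)) / sqrt 2 into itself and contracts
  it by the factor sqrt 2 \<rho> < 1. Its fixed point gives ||L^-1 \<Delta>L||_F = ||X J||_F = ||X||_F \<le> \<rho>.\<close>

section \<open>Euclidean and Frobenius norms\<close>

lemma vnorm2_eq_L2_set:
  assumes "v \<in> carrier_vec k"
  shows "vnorm2 v = L2_set (\<lambda>i. v $ i) {..<k}"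
  using assms by (simp add: vnorm2_def L2_set_def scalar_prod_def atLeast0LessThan power2_eq_square)

lemma vnorm2_nonneg [simp]: "0 \<le> vnorm2 v"
  by (simp add: vnorm2_def scalar_prod_def sum_nonneg)

lemma vnorm2_sq:
  assumes "v \<in> carrier_vec k"
  shows "(vnorm2 v)\<^sup>2 = (\<Sum>i<k. (v $ i)\<^sup>2)"
  by (simp add: vnorm2_eq_L2_set[OF assms] L2_set_def sum_nonneg)

lemma vnorm2_smult: "vnorm2 (a \<cdot>\<^sub>v v) = \<bar>a\<bar> * vnorm2 v"
  by (simp add: vnorm2_def real_sqrt_mult mult.assoc[symmetric])

lemma abs_scalar_prod_le_vnorm2:
  assumes "u \<in> carrier_vec k" "w \<in> carrier_vec k"
  shows "\<bar>u \<bullet> w\<bar> \<le> vnorm2 u * vnorm2 w"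
proof -
  have "\<bar>u \<bullet> w\<bar> = \<bar>\<Sum>i<k. u $ i * w $ i\<bar>"
    using assms by (simp add: scalar_prod_def atLeast0LessThan)
  also have "\<dots> \<le> (\<Sum>i<k. \<bar>u $ i\<bar> * \<bar>w $ i\<bar>)"
    by (rule order_trans[OF sum_abs]) (simp add: abs_mult)
  also have "\<dots> \<le> vnorm2 u * vnorm2 w"
    unfolding vnorm2_eq_L2_set[OF assms(1)] vnorm2_eq_L2_set[OF assms(2)] by (rule L2_set_mult_ineq)
  finally show ?thesis .
qed

lemma scalar_prod_sq_le_vnorm2:
  assumes "u \<in> carrier_vec k" "w \<in> carrier_vec k"
  shows "(u \<bullet> w)\<^sup>2 \<le> (vnorm2 u)\<^sup>2 * (vnorm2 w)\<^sup>2"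
  using power_mono[OF abs_scalar_prod_le_vnorm2[OF assms] abs_ge_zero, of 2]
  by (simp add: power_mult_distrib)

lemma frob_norm_nonneg [simp]: "0 \<le> frob_norm A"
  by (simp add: frob_norm_def sum_nonneg)

lemma frob_norm_sq: "(frob_norm A)\<^sup>2 = (\<Sum>i<dim_row A. \<Sum>j<dim_col A. (A $$ (i,j))\<^sup>2)"
  by (simp add: frob_norm_def sum_nonneg)

lemma frob_norm_eq_L2_set: "frob_norm A = L2_set (\<lambda>p. A $$ p) ({..<dim_row A} \<times> {..<dim_col A})"
  by (simp add: frob_norm_def L2_set_def sum.cartesian_product case_prod_beta)

lemma frob_norm_sq_rows:
  assumes "A \<in> carrier_mat r c"
  shows "(frob_norm A)\<^sup>2 = (\<Sum>i<r. (vnorm2 (row A i))\<^sup>2)"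
  using assms by (simp add: frob_norm_sq vnorm2_sq[of _ c])

lemma frob_norm_sq_cols:
  assumes "A \<in> carrier_mat r c"
  shows "(frob_norm A)\<^sup>2 = (\<Sum>j<c. (vnorm2 (col A j))\<^sup>2)"
  using assms by (simp add: frob_norm_sq vnorm2_sq[of _ r] sum.swap[of _ "{..<c}"])

lemma abs_index_le_frob_norm:
  assumes "i < dim_row A" "j < dim_col A"
  shows "\<bar>A $$ (i,j)\<bar> \<le> frob_norm A"
proof -
  have "(A $$ (i,j))\<^sup>2 \<le> (\<Sum>p\<in>{..<dim_row A} \<times> {..<dim_col A}. (A $$ p)\<^sup>2)"
    by (rule member_le_sum[where f = "\<lambda>p. (A $$ p)\<^sup>2"]) (use assms in auto)
  then show ?thesis
    unfolding frob_norm_eq_L2_set L2_set_def by (metis real_sqrt_abs real_sqrt_le_mono)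
qed

lemma frob_norm_uminus [simp]: "frob_norm (- A) = frob_norm A"
  by (simp add: frob_norm_def)

lemma frob_norm_transpose [simp]: "frob_norm (transpose_mat A) = frob_norm A"
  by (simp add: frob_norm_def sum.swap[of _ "{..<dim_row A}"])

lemma frob_norm_add_le:
  assumes "A \<in> carrier_mat r c" "B \<in> carrier_mat r c"
  shows "frob_norm (A + B) \<le> frob_norm A + frob_norm B"
proof -
  have "frob_norm (A + B) = L2_set (\<lambda>p. A $$ p + B $$ p) ({..<r} \<times> {..<c})"
    unfolding frob_norm_eq_L2_set using assms by (intro L2_set_cong) auto
  also have "\<dots> \<le> frob_norm A + frob_norm B"
    unfolding frob_norm_eq_L2_set using assms by (simp add: L2_set_triangle_ineq)
  finally show ?thesis .
qed

lemma frob_norm_minus_le: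
  assumes "A \<in> carrier_mat r c" "B \<in> carrier_mat r c"
  shows "frob_norm (A - B) \<le> frob_norm A + frob_norm B"
  using frob_norm_add_le[of A r c "- B"] assms by (simp add: minus_add_uminus_mat)

lemma frob_norm_minus_commute:
  assumes "A \<in> carrier_mat r c" "B \<in> carrier_mat r c"
  shows "frob_norm (A - B) = frob_norm (B - A)"
  using assms by (simp add: frob_norm_def power2_commute)

lemma frob_norm_mult_le:
  assumes A: "A \<in> carrier_mat r k" and B: "B \<in> carrier_mat k c"
  shows "frob_norm (A * B) \<le> frob_norm A * frob_norm B"
proof (rule power2_le_imp_le)
  have "(frob_norm (A * B))\<^sup>2 = (\<Sum>i<r. \<Sum>j<c. (row A i \<bullet> col B j)\<^sup>2)"
    using A B by (simp add: frob_norm_sq)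
  also have "\<dots> \<le> (\<Sum>i<r. \<Sum>j<c. (vnorm2 (row A i))\<^sup>2 * (vnorm2 (col B j))\<^sup>2)"
    using A B by (intro sum_mono scalar_prod_sq_le_vnorm2[of _ k]) auto
  also have "\<dots> = (frob_norm A * frob_norm B)\<^sup>2"
    by (simp add: frob_norm_sq_rows[OF A] frob_norm_sq_cols[OF B] power_mult_distrib sum_product)
  finally show "(frob_norm (A * B))\<^sup>2 \<le> (frob_norm A * frob_norm B)\<^sup>2" .
qed simp

lemma tendsto_frob_norm:
  assumes "\<And>k. A k \<in> carrier_mat r c" "B \<in> carrier_mat r c"
    and "\<And>i j. i < r \<Longrightarrow> j < c \<Longrightarrow> (\<lambda>k. A k $$ (i,j)) \<longlonglongrightarrow> B $$ (i,j)"
  shows "(\<lambda>k. frob_norm (A k)) \<longlonglongrightarrow> frob_norm B"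
proof -
  have "(\<lambda>k. sqrt (\<Sum>i<r. \<Sum>j<c. (A k $$ (i,j))\<^sup>2))
      \<longlonglongrightarrow> sqrt (\<Sum>i<r. \<Sum>j<c. (B $$ (i,j))\<^sup>2)"
    using assms(3) by (intro tendsto_real_sqrt tendsto_sum tendsto_power) auto
  moreover have "dim_row (A k) = r" "dim_col (A k) = c" for k
    using assms(1)[of k] by auto
  ultimately show ?thesis
    using assms(2) by (simp add: frob_norm_def)
qed

lemma vnorm2_mult_mat_vec_le_frob_norm:
  assumes M: "M \<in> carrier_mat r k" and v: "v \<in> carrier_vec k"
  shows "vnorm2 (M *\<^sub>v v) \<le> frob_norm M * vnorm2 v"
proof (rule power2_le_imp_le)
  have "(vnorm2 (M *\<^sub>v v))\<^sup>2 = (\<Sum>i<r. (row M i \<bullet> v)\<^sup>2)"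
    using M v by (subst vnorm2_sq[of _ r]) auto
  also have "\<dots> \<le> (\<Sum>i<r. (vnorm2 (row M i))\<^sup>2 * (vnorm2 v)\<^sup>2)"
    using M v by (intro sum_mono scalar_prod_sq_le_vnorm2[of _ k]) auto
  also have "\<dots> = (frob_norm M * vnorm2 v)\<^sup>2"
    by (simp add: frob_norm_sq_rows[OF M] power_mult_distrib sum_distrib_right)
  finally show "(vnorm2 (M *\<^sub>v v))\<^sup>2 \<le> (frob_norm M * vnorm2 v)\<^sup>2" .
qed simp

section \<open>The spectral norm\<close>

lemma vnorm2_mult_mat_vec_le_spec_norm:
  assumes M: "M \<in> carrier_mat r k" and v: "v \<in> carrier_vec k"
  shows "vnorm2 (M *\<^sub>v v) \<le> spec_norm M * vnorm2 v"
proof (cases "vnorm2 v = 0")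
  case True
  then show ?thesis
    using vnorm2_mult_mat_vec_le_frob_norm[OF M v] vnorm2_nonneg[of "M *\<^sub>v v"] by simp
next
  case False
  define w where "w = (1 / vnorm2 v) \<cdot>\<^sub>v v"
  have w: "w \<in> carrier_vec k" "vnorm2 w = 1"
    using v False by (simp_all add: w_def vnorm2_smult)
  have "bdd_above {vnorm2 (M *\<^sub>v x) | x. x \<in> carrier_vec (dim_col M) \<and> vnorm2 x = 1}"
  proof (rule bdd_aboveI)
    fix y assume "y \<in> {vnorm2 (M *\<^sub>v x) | x. x \<in> carrier_vec (dim_col M) \<and> vnorm2 x = 1}"
    then obtain x where "x \<in> carrier_vec k" "vnorm2 x = 1" "y = vnorm2 (M *\<^sub>v x)"
      using M by auto
    then show "y \<le> frob_norm M"
      using vnorm2_mult_mat_vec_le_frob_norm[OF M, of x] by simp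
  qed
  then have "vnorm2 (M *\<^sub>v w) \<le> spec_norm M"
    unfolding spec_norm_def using M w by (intro cSup_upper) auto
  moreover have "M *\<^sub>v w = (1 / vnorm2 v) \<cdot>\<^sub>v (M *\<^sub>v v)"
    unfolding w_def by (rule mult_mat_vec[OF M v])
  ultimately show ?thesis
    using False vnorm2_nonneg[of v] by (simp add: vnorm2_smult field_simps)
qed

text \<open>Stated with squares: for a matrix without columns spec_norm is the junk value Sup {},
  which need not be nonnegative.\<close>
lemma frob_norm_mult_sq_le_spec_norm:
  assumes M: "M \<in> carrier_mat r k" and A: "A \<in> carrier_mat k c"
  shows "(frob_norm (M * A))\<^sup>2 \<le> (spec_norm M)\<^sup>2 * (frob_norm A)\<^sup>2"
proof -
  have "(frob_norm (M * A))\<^sup>2 = (\<Sum>j<c. (vnorm2 (col (M * A) j))\<^sup>2)"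
    using M A by (intro frob_norm_sq_cols[of _ r]) simp
  also have "\<dots> = (\<Sum>j<c. (vnorm2 (M *\<^sub>v col A j))\<^sup>2)"
    by (intro sum.cong refl) (subst col_mult2[OF M A], auto)
  also have "\<dots> \<le> (\<Sum>j<c. (spec_norm M * vnorm2 (col A j))\<^sup>2)"
    using M A by (intro sum_mono power_mono vnorm2_mult_mat_vec_le_spec_norm) auto
  also have "\<dots> = (spec_norm M)\<^sup>2 * (frob_norm A)\<^sup>2"
    by (simp add: frob_norm_sq_cols[OF A] power_mult_distrib sum_distrib_left)
  finally show ?thesis .
qed

lemma frob_norm_congruence_le:
  assumes M: "M \<in> carrier_mat r k" and D: "D \<in> carrier_mat k k"
  shows "frob_norm (M * D * transpose_mat M) \<le> (spec_norm M)\<^sup>2 * frob_norm D"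
proof (rule power2_le_imp_le)
  have "transpose_mat (D * transpose_mat M) = M * transpose_mat D"
    using M D by (simp add: transpose_mult)
  then have "frob_norm (D * transpose_mat M) = frob_norm (M * transpose_mat D)"
    by (metis frob_norm_transpose)
  moreover have "M * D * transpose_mat M = M * (D * transpose_mat M)"
    using M D by simp
  ultimately have "(frob_norm (M * D * transpose_mat M))\<^sup>2
      \<le> (spec_norm M)\<^sup>2 * (frob_norm (M * transpose_mat D))\<^sup>2"
    using frob_norm_mult_sq_le_spec_norm[OF M, of "D * transpose_mat M" r] M D by simp
  also have "\<dots> \<le> (spec_norm M)\<^sup>2 * ((spec_norm M)\<^sup>2 * (frob_norm D)\<^sup>2)"
    using frob_norm_mult_sq_le_spec_norm[OF M, of "transpose_mat D" k] D
    by (intro mult_left_mono) auto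
  finally show "(frob_norm (M * D * transpose_mat M))\<^sup>2 \<le> ((spec_norm M)\<^sup>2 * frob_norm D)\<^sup>2"
    by (simp add: power_mult_distrib)
qed simp

section \<open>The signature matrix\<close>

lemma index_Jsig:
  "i < m + n \<Longrightarrow> j < m + n \<Longrightarrow>
    Jsig m n $$ (i,j) = (if i \<noteq> j then 0 else if i < m then 1 else -1)"
  by (auto simp: Jsig_def)

lemma Jsig_carrier [simp]: "Jsig m n \<in> carrier_mat (m + n) (m + n)"
  by (simp add: Jsig_def)

lemma Jsig_dim [simp]: "dim_row (Jsig m n) = m + n" "dim_col (Jsig m n) = m + n"
  by (simp_all add: Jsig_def)

lemma abs_Jsig_diag: "i < m + n \<Longrightarrow> \<bar>Jsig m n $$ (i,i)\<bar> = 1"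
  by (simp add: index_Jsig)

lemma transpose_Jsig [simp]: "transpose_mat (Jsig m n) = Jsig m n"
  by (rule eq_matI) (auto simp: index_Jsig Jsig_def)

lemma index_mult_Jsig:
  assumes "A \<in> carrier_mat r (m + n)" "i < r" "k < m + n"
  shows "(A * Jsig m n) $$ (i,k) = A $$ (i,k) * Jsig m n $$ (k,k)"
proof -
  have "(A * Jsig m n) $$ (i,k) = (\<Sum>l<m+n. A $$ (i,l) * Jsig m n $$ (l,k))"
    using assms by (simp add: scalar_prod_def atLeast0LessThan)
  also have "\<dots> = (\<Sum>l<m+n. if l = k then A $$ (i,k) * Jsig m n $$ (k,k) else 0)"
    using assms(3) by (intro sum.cong) (auto simp: index_Jsig)
  finally show ?thesis
    using assms(3) by simp
qed

lemma Jsig_mult_Jsig [simp]: "Jsig m n * Jsig m n = 1\<^sub>m (m + n)"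
proof (rule eq_matI)
  fix i j assume "i < dim_row (1\<^sub>m (m + n))" "j < dim_col (1\<^sub>m (m + n))"
  then show "(Jsig m n * Jsig m n) $$ (i,j) = 1\<^sub>m (m + n) $$ (i,j)"
    by (subst index_mult_Jsig[OF Jsig_carrier]) (auto simp: index_Jsig)
qed auto

lemma frob_norm_mult_Jsig:
  assumes A: "A \<in> carrier_mat r (m + n)"
  shows "frob_norm (A * Jsig m n) = frob_norm A"
proof -
  have "((A * Jsig m n) $$ (i,k))\<^sup>2 = (A $$ (i,k))\<^sup>2" if "i < r" "k < m + n" for i k
    unfolding index_mult_Jsig[OF A that] using that by (simp add: index_Jsig power_mult_distrib)
  then show ?thesis
    using A unfolding frob_norm_def by (simp del: index_mult_mat(1))
qed

lemma index_Jsig_product: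
  assumes X: "X \<in> carrier_mat r (m + n)" and "Y \<in> carrier_mat s (m + n)" "i < r" "j < s"
  shows "(X * Jsig m n * transpose_mat Y) $$ (i,j) = (\<Sum>k<m+n. X $$ (i,k) * Jsig m n $$ (k,k) * Y $$ (j,k))"
proof -
  have "(X * Jsig m n * transpose_mat Y) $$ (i,j)
      = (\<Sum>k<m+n. (X * Jsig m n) $$ (i,k) * transpose_mat Y $$ (k,j))"
    using assms by (simp add: scalar_prod_def atLeast0LessThan)
  also have "\<dots> = (\<Sum>k<m+n. X $$ (i,k) * Jsig m n $$ (k,k) * Y $$ (j,k))"
    using assms by (intro sum.cong) (auto simp del: index_mult_mat(1) simp: index_mult_Jsig[OF X])
  finally show ?thesis .
qed

lemma Jsig_product_carrier:
  "X \<in> carrier_mat r (m + n) \<Longrightarrow> Y \<in> carrier_mat s (m + n) \<Longrightarrow>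
    X * Jsig m n * transpose_mat Y \<in> carrier_mat r s"
  by (intro mult_carrier_mat[of _ _ "m + n"]) auto

lemma frob_norm_Jsig_product_le:
  assumes "X \<in> carrier_mat r (m + n)" "Y \<in> carrier_mat s (m + n)"
  shows "frob_norm (X * Jsig m n * transpose_mat Y) \<le> frob_norm X * frob_norm Y"
  using frob_norm_mult_le[of "X * Jsig m n" r "m + n" "transpose_mat Y" s] assms
  by (simp add: frob_norm_mult_Jsig)

lemma Jsig_product_diff:
  assumes X: "X \<in> carrier_mat (m + n) (m + n)" and Y: "Y \<in> carrier_mat (m + n) (m + n)"
  shows "Y * Jsig m n * transpose_mat Y - X * Jsig m n * transpose_mat X
    = Y * Jsig m n * transpose_mat (Y - X) + (Y - X) * Jsig m n * transpose_mat X"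
proof (rule eq_matI)
  fix i j assume "i < dim_row (Y * Jsig m n * transpose_mat (Y - X) + (Y - X) * Jsig m n * transpose_mat X)"
    "j < dim_col (Y * Jsig m n * transpose_mat (Y - X) + (Y - X) * Jsig m n * transpose_mat X)"
  then have ij: "i < m + n" "j < m + n"
    using X Y by simp_all
  have YX: "Y - X \<in> carrier_mat (m + n) (m + n)"
    using X Y by (simp add: minus_carrier_mat)
  show "(Y * Jsig m n * transpose_mat Y - X * Jsig m n * transpose_mat X) $$ (i,j)
    = (Y * Jsig m n * transpose_mat (Y - X) + (Y - X) * Jsig m n * transpose_mat X) $$ (i,j)"
    using X Y ij
    by (simp del: index_mult_mat(1)
        add: index_Jsig_product[OF _ _ ij] index_Jsig_product[OF YX _ ij] index_Jsig_product[OF _ YX ij]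
        algebra_simps flip: sum_subtractf sum.distrib)
qed (use X Y in simp_all)

section \<open>Symmetric matrices and their lower part\<close>

lemma sym_mat_index:
  assumes "sym_mat S" "i < dim_row S" "j < dim_row S"
  shows "S $$ (j,i) = S $$ (i,j)"
  using assms index_transpose_mat(1)[of j S i] by (simp add: sym_mat_def)

lemma sym_mat_minus:
  assumes "sym_mat A" "sym_mat B" "A \<in> carrier_mat k k" "B \<in> carrier_mat k k"
  shows "sym_mat (A - B)"
  using assms by (auto simp: sym_mat_def transpose_minus)

lemma sym_mat_congruence:
  assumes M: "M \<in> carrier_mat r k" and D: "D \<in> carrier_mat k k" and "transpose_mat D = D"
  shows "sym_mat (M * D * transpose_mat M)"
proof -
  have "transpose_mat (M * D * transpose_mat M) = M * transpose_mat (M * D)"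
    by (subst transpose_mult[of _ r k _ r]) (use M D in auto)
  also have "transpose_mat (M * D) = D * transpose_mat M"
    using transpose_mult[OF M D] assms(3) by simp
  also have "M * (D * transpose_mat M) = M * D * transpose_mat M"
    using M D by simp
  finally show ?thesis
    using M D by (simp add: sym_mat_def)
qed

text \<open>On lower triangular matrices, low_part inverts X \<mapsto> X + transpose X.\<close>
definition low_part :: "real mat \<Rightarrow> real mat" where
  "low_part S = mat (dim_row S) (dim_col S)
     (\<lambda>(i,j). if j < i then S $$ (i,j) else if i = j then S $$ (i,j) / 2 else 0)"

lemma low_part_dim [simp]:
  "dim_row (low_part S) = dim_row S" "dim_col (low_part S) = dim_col S"
  by (simp_all add: low_part_def)

lemma low_part_carrier [simp]: "S \<in> carrier_mat r c \<Longrightarrow> low_part S \<in> carrier_mat r c"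
  by (simp add: low_part_def carrier_matD)

lemma index_low_part:
  "i < dim_row S \<Longrightarrow> j < dim_col S \<Longrightarrow>
    low_part S $$ (i,j) = (if j < i then S $$ (i,j) else if i = j then S $$ (i,j) / 2 else 0)"
  by (simp add: low_part_def)

lemma lower_tri_low_part: "lower_tri (low_part S)"
  by (simp add: lower_tri_def index_low_part)

lemma low_part_minus:
  assumes "A \<in> carrier_mat r c" "B \<in> carrier_mat r c"
  shows "low_part (A - B) = low_part A - low_part B"
proof (rule eq_matI)
  fix i j assume "i < dim_row (low_part A - low_part B)" "j < dim_col (low_part A - low_part B)"
  then show "low_part (A - B) $$ (i,j) = (low_part A - low_part B) $$ (i,j)"
    using assms by (simp add: index_low_part diff_divide_distrib)
qed (use assms in auto)

lemma low_part_add_transpose: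
  assumes "sym_mat S"
  shows "low_part S + transpose_mat (low_part S) = S"
proof -
  have dims: "dim_col S = dim_row S"
    using assms by (simp add: sym_mat_def)
  show ?thesis
  proof (rule eq_matI)
    fix i j assume ij: "i < dim_row S" "j < dim_col S"
    have "low_part S $$ (i,j) + low_part S $$ (j,i) = S $$ (i,j)"
      using ij dims sym_mat_index[OF assms, of i j] by (simp add: index_low_part)
    then show "(low_part S + transpose_mat (low_part S)) $$ (i,j) = S $$ (i,j)"
      using ij dims by simp
  qed (simp_all add: dims)
qed

lemma low_part_index_sq_le:
  assumes S: "sym_mat S" and ij: "i < dim_row S" "j < dim_row S"
  shows "(low_part S $$ (i,j))\<^sup>2 + (low_part S $$ (j,i))\<^sup>2 \<le> (S $$ (i,j))\<^sup>2"
proof -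
  have "dim_col S = dim_row S"
    using S by (simp add: sym_mat_def)
  then show ?thesis
    using ij sym_mat_index[OF assms]
    by (cases i j rule: linorder_cases) (simp_all add: index_low_part power_divide)
qed

lemma frob_norm_low_part_le:
  assumes S: "sym_mat S"
  shows "sqrt 2 * frob_norm (low_part S) \<le> frob_norm S"
proof (rule power2_le_imp_le)
  have dims: "dim_col S = dim_row S"
    using S by (simp add: sym_mat_def)
  let ?N = "dim_row S" and ?g = "\<lambda>i j. (low_part S $$ (i,j))\<^sup>2"
  have "(\<Sum>i<?N. \<Sum>j<?N. ?g j i) = (\<Sum>i<?N. \<Sum>j<?N. ?g i j)"
    by (rule sum.swap)
  then have "(sqrt 2 * frob_norm (low_part S))\<^sup>2 = (\<Sum>i<?N. \<Sum>j<?N. ?g i j + ?g j i)"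
    by (simp add: power_mult_distrib frob_norm_sq dims sum.distrib)
  also have "\<dots> \<le> (\<Sum>i<?N. \<Sum>j<?N. (S $$ (i,j))\<^sup>2)"
    by (intro sum_mono low_part_index_sq_le[OF S]) simp_all
  also have "\<dots> = (frob_norm S)\<^sup>2"
    by (simp add: frob_norm_sq dims)
  finally show "(sqrt 2 * frob_norm (low_part S))\<^sup>2 \<le> (frob_norm S)\<^sup>2" .
qed simp

section \<open>Lower triangular matrices\<close>

lemma lower_tri_mult:
  assumes A: "A \<in> carrier_mat k k" "lower_tri A" and B: "B \<in> carrier_mat k k" "lower_tri B"
  shows "lower_tri (A * B)"
  unfolding lower_tri_def
proof (intro allI impI)
  fix i j assume ij: "i < dim_row (A * B)" "j < dim_col (A * B)" "i < j"
  have "A $$ (i,l) * B $$ (l,j) = 0" if "l < k" for l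
    using A B ij that unfolding lower_tri_def by (cases "i < l") auto
  then have "(\<Sum>l = 0..<k. A $$ (i,l) * B $$ (l,j)) = 0"
    by (intro sum.neutral) simp
  then show "(A * B) $$ (i,j) = 0"
    using A B ij by (simp add: scalar_prod_def)
qed

lemma diag_mult_lower_tri:
  assumes A: "A \<in> carrier_mat k k" "lower_tri A" and B: "B \<in> carrier_mat k k" "lower_tri B"
    and i: "i < k"
  shows "(A * B) $$ (i,i) = A $$ (i,i) * B $$ (i,i)"
proof -
  have summand: "A $$ (i,l) * B $$ (l,i) = (if l = i then A $$ (i,i) * B $$ (i,i) else 0)"
    if "l < k" for l
  proof (cases l i rule: linorder_cases)
    case less
    then have "B $$ (l,i) = 0"
      using B i that unfolding lower_tri_def by simp
    then show ?thesis using less by simp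
  next
    case greater
    then have "A $$ (i,l) = 0"
      using A i that unfolding lower_tri_def by simp
    then show ?thesis using greater by simp
  qed simp
  have "(\<Sum>l = 0..<k. A $$ (i,l) * B $$ (l,i)) = (\<Sum>l = 0..<k. if l = i then A $$ (i,i) * B $$ (i,i) else 0)"
    by (rule sum.cong[OF refl], rule summand) simp
  also have "\<dots> = A $$ (i,i) * B $$ (i,i)"
    using i by simp
  finally have "(\<Sum>l = 0..<k. A $$ (i,l) * B $$ (l,i)) = A $$ (i,i) * B $$ (i,i)" .
  then show ?thesis
    using A B i by (simp add: scalar_prod_def)
qed

lemma invertible_matE:
  assumes A: "A \<in> carrier_mat k k" and "invertible_mat A"
  obtains B where "B \<in> carrier_mat k k" "A * B = 1\<^sub>m k" "B * A = 1\<^sub>m k"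
proof -
  obtain B where "A * B = 1\<^sub>m (dim_row A)" and BA: "B * A = 1\<^sub>m (dim_row B)"
    using assms(2) unfolding invertible_mat_def inverts_mat_def by blast
  then have AB: "A * B = 1\<^sub>m k"
    using A by simp
  have "dim_row B = k"
    using arg_cong[OF BA, of dim_col] A by simp
  moreover have "dim_col B = k"
    using arg_cong[OF AB, of dim_col] by simp
  ultimately show thesis
    using AB BA by (intro that carrier_matI) simp_all
qed

lemma invertible_mat_iff_det:
  fixes A :: "'a :: field mat"
  assumes A: "A \<in> carrier_mat k k"
  shows "invertible_mat A \<longleftrightarrow> det A \<noteq> 0"
proof
  assume "invertible_mat A"
  with A obtain B where B: "B \<in> carrier_mat k k" and "A * B = 1\<^sub>m k"
    by (rule invertible_matE)
  then have "det A * det B = 1"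
    using det_mult[OF A B] by simp
  then show "det A \<noteq> 0" by auto
next
  assume "det A \<noteq> 0"
  then obtain B where "B \<in> carrier_mat k k" "B * A = 1\<^sub>m k" "A * B = 1\<^sub>m k"
    using det_non_zero_imp_unit[OF A] unfolding Units_def ring_mat_def by auto
  then show "invertible_mat A"
    using A unfolding invertible_mat_def inverts_mat_def by (auto intro!: exI[of _ B])
qed

lemma invertible_lower_tri_iff:
  fixes A :: "real mat"
  assumes A: "A \<in> carrier_mat k k" and "lower_tri A"
  shows "invertible_mat A \<longleftrightarrow> (\<forall>i<k. A $$ (i,i) \<noteq> 0)"
proof -
  have "det A = (\<Prod>i = 0..<k. A $$ (i,i))"
    using assms det_lower_triangular[OF _ A] unfolding lower_tri_def
    by (simp add: prod_list_diag_prod)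
  then show ?thesis
    using invertible_mat_iff_det[OF A] by (auto simp: atLeast0LessThan)
qed

lemma all_less_add_iff:
  fixes m n :: nat
  shows "(\<forall>i<m+n. P i) \<longleftrightarrow> (\<forall>i<m. P i) \<and> (\<forall>i<n. P (m + i))"
proof (intro iffI allI impI)
  fix i assume h: "(\<forall>i<m. P i) \<and> (\<forall>i<n. P (m + i))" and "i < m + n"
  then show "P i"
    using h[THEN conjunct2, rule_format, of "i - m"] by (cases "i < m") auto
qed auto

lemma gen_cholesky_iff:
  "gen_cholesky m n K L \<longleftrightarrow>
     L \<in> carrier_mat (m + n) (m + n) \<and> lower_tri L \<and> (\<forall>i<m+n. L $$ (i,i) \<noteq> 0) \<and>
     K = L * Jsig m n * transpose_mat L"
proof -
  have blocks: "invertible_mat (mat m m (\<lambda>(i,j). L $$ (i,j))) \<and>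
      invertible_mat (mat n n (\<lambda>(i,j). L $$ (m + i, m + j))) \<longleftrightarrow> (\<forall>i<m+n. L $$ (i,i) \<noteq> 0)"
    if "L \<in> carrier_mat (m + n) (m + n)" "lower_tri L"
  proof -
    have "lower_tri (mat m m (\<lambda>(i,j). L $$ (i,j)))" "lower_tri (mat n n (\<lambda>(i,j). L $$ (m + i, m + j)))"
      using that unfolding lower_tri_def by auto
    then have "invertible_mat (mat m m (\<lambda>(i,j). L $$ (i,j))) \<longleftrightarrow> (\<forall>i<m. L $$ (i,i) \<noteq> 0)"
      and "invertible_mat (mat n n (\<lambda>(i,j). L $$ (m + i, m + j))) \<longleftrightarrow>
        (\<forall>i<n. L $$ (m + i, m + i) \<noteq> 0)"
      by (simp_all add: invertible_lower_tri_iff[of _ m] invertible_lower_tri_iff[of _ n])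
    then show ?thesis
      by (simp add: all_less_add_iff)
  qed
  show ?thesis
    unfolding gen_cholesky_def using blocks by blast
qed

lemma mat_inv:
  assumes A: "A \<in> carrier_mat k k" and "invertible_mat A"
  shows "mat_inv A \<in> carrier_mat k k" "A * mat_inv A = 1\<^sub>m k" "mat_inv A * A = 1\<^sub>m k"
proof -
  obtain B where "B \<in> carrier_mat k k" "A * B = 1\<^sub>m k" "B * A = 1\<^sub>m k"
    using assms by (rule invertible_matE)
  then have "\<exists>B. B \<in> carrier_mat (dim_row A) (dim_row A) \<and>
      A * B = 1\<^sub>m (dim_row A) \<and> B * A = 1\<^sub>m (dim_row A)"
    using A by auto
  from someI_ex[OF this] A
  show "mat_inv A \<in> carrier_mat k k" "A * mat_inv A = 1\<^sub>m k" "mat_inv A * A = 1\<^sub>m k"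
    unfolding mat_inv_def by auto
qed

section \<open>The fixed-point equation\<close>

locale low_part_fixed_point =
  fixes m n :: nat and E :: "real mat" and \<epsilon> :: real
  assumes E: "E \<in> carrier_mat (m + n) (m + n)" and sym_E: "sym_mat E"
    and frob_E: "frob_norm E \<le> \<epsilon>" and \<epsilon>_less: "\<epsilon> < 1 / 2"
begin

text \<open>The smaller root of t^2 - sqrt 2 * t + \<epsilon> = 0 (see radius_eq): the ball of this radius is
  invariant under \<Phi>, and \<Phi> contracts it by the factor sqrt 2 * radius.\<close>
definition radius :: real where
  "radius = (1 - sqrt (1 - 2 * \<epsilon>)) / sqrt 2"

definition \<Phi> :: "real mat \<Rightarrow> real mat" where
  "\<Phi> X = low_part (E - X * Jsig m n * transpose_mat X)"

lemma radius_nonneg: "0 \<le> radius"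
  and radius_eq: "\<epsilon> + radius\<^sup>2 = sqrt 2 * radius"
  and radius_contraction: "sqrt 2 * radius < 1"
proof -
  have "0 \<le> \<epsilon>"
    using frob_E frob_norm_nonneg[of E] by linarith
  define t where "t = sqrt (1 - 2 * \<epsilon>)"
  have t: "t\<^sup>2 = 1 - 2 * \<epsilon>" "0 < t" "t \<le> 1"
    using \<epsilon>_less \<open>0 \<le> \<epsilon>\<close> by (simp_all add: t_def)
  have r: "sqrt 2 * radius = 1 - t"
    by (simp add: radius_def t_def)
  show "0 \<le> radius"
    using t(3) by (simp add: radius_def t_def)
  show "sqrt 2 * radius < 1"
    using r t(2) by simp
  have "2 * radius\<^sup>2 = (1 - t)\<^sup>2"
    using r by (metis power_mult_distrib real_sqrt_pow2 zero_le_numeral)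
  then show "\<epsilon> + radius\<^sup>2 = sqrt 2 * radius"
    using r t(1) by (simp add: power2_eq_square algebra_simps)
qed

lemma radius_less_one: "radius < 1"
proof -
  have "radius \<le> sqrt 2 * radius"
    using radius_nonneg by (simp add: mult_le_cancel_right1)
  then show ?thesis
    using radius_contraction by linarith
qed

lemma E_minus_product_carrier:
  "X \<in> carrier_mat (m + n) (m + n) \<Longrightarrow>
    E - X * Jsig m n * transpose_mat X \<in> carrier_mat (m + n) (m + n)"
  using Jsig_product_carrier by (simp add: minus_carrier_mat)

lemma \<Phi>_carrier: "X \<in> carrier_mat (m + n) (m + n) \<Longrightarrow> \<Phi> X \<in> carrier_mat (m + n) (m + n)"
  unfolding \<Phi>_def using E_minus_product_carrier by simp

lemma sym_mat_E_minus_product: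
  "X \<in> carrier_mat (m + n) (m + n) \<Longrightarrow> sym_mat (E - X * Jsig m n * transpose_mat X)"
  using E sym_E by (intro sym_mat_minus sym_mat_congruence) auto

lemma frob_norm_\<Phi>_le:
  assumes X: "X \<in> carrier_mat (m + n) (m + n)" and "frob_norm X \<le> radius"
  shows "frob_norm (\<Phi> X) \<le> radius"
proof -
  have "sqrt 2 * frob_norm (\<Phi> X) \<le> frob_norm (E - X * Jsig m n * transpose_mat X)"
    unfolding \<Phi>_def by (rule frob_norm_low_part_le[OF sym_mat_E_minus_product[OF X]])
  also have "\<dots> \<le> frob_norm E + frob_norm X * frob_norm X"
    using frob_norm_minus_le[OF E Jsig_product_carrier[OF X X]] frob_norm_Jsig_product_le[OF X X]
    by linarith
  also have "\<dots> \<le> \<epsilon> + radius\<^sup>2"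
    unfolding power2_eq_square using frob_E assms(2) radius_nonneg
    by (intro add_mono mult_mono) simp_all
  finally show ?thesis
    using radius_eq by simp
qed

lemma frob_norm_\<Phi>_minus_le:
  assumes X: "X \<in> carrier_mat (m + n) (m + n)" "frob_norm X \<le> radius"
    and Y: "Y \<in> carrier_mat (m + n) (m + n)" "frob_norm Y \<le> radius"
  shows "frob_norm (\<Phi> X - \<Phi> Y) \<le> sqrt 2 * radius * frob_norm (X - Y)"
proof -
  let ?D = "Y * Jsig m n * transpose_mat Y - X * Jsig m n * transpose_mat X"
  have YX: "Y - X \<in> carrier_mat (m + n) (m + n)"
    using X Y by (simp add: minus_carrier_mat)
  have "\<Phi> X - \<Phi> Y = low_part ((E - X * Jsig m n * transpose_mat X) - (E - Y * Jsig m n * transpose_mat Y))"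
    unfolding \<Phi>_def using E_minus_product_carrier X(1) Y(1) by (intro low_part_minus[symmetric])
  also have "(E - X * Jsig m n * transpose_mat X) - (E - Y * Jsig m n * transpose_mat Y) = ?D"
    using E X Y by (intro eq_matI) auto
  finally have "\<Phi> X - \<Phi> Y = low_part ?D" .
  moreover have "sym_mat ?D"
    using X Y by (intro sym_mat_minus sym_mat_congruence) auto
  ultimately have "sqrt 2 * frob_norm (\<Phi> X - \<Phi> Y) \<le> frob_norm ?D"
    by (simp add: frob_norm_low_part_le)
  also have "\<dots> \<le> frob_norm (Y * Jsig m n * transpose_mat (Y - X))
      + frob_norm ((Y - X) * Jsig m n * transpose_mat X)"
    unfolding Jsig_product_diff[OF X(1) Y(1)]
    by (rule frob_norm_add_le[OF Jsig_product_carrier[OF Y(1) YX] Jsig_product_carrier[OF YX X(1)]])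
  also have "\<dots> \<le> frob_norm Y * frob_norm (Y - X) + frob_norm (Y - X) * frob_norm X"
    by (rule add_mono[OF frob_norm_Jsig_product_le[OF Y(1) YX] frob_norm_Jsig_product_le[OF YX X(1)]])
  also have "\<dots> \<le> radius * frob_norm (Y - X) + frob_norm (Y - X) * radius"
    using X Y by (intro add_mono mult_right_mono mult_left_mono) simp_all
  also have "\<dots> = sqrt 2 * (sqrt 2 * radius * frob_norm (X - Y))"
    using frob_norm_minus_commute[OF Y(1) X(1)] by simp
  finally show ?thesis
    by simp
qed

definition iterate :: "nat \<Rightarrow> real mat" where
  "iterate k = (\<Phi> ^^ k) (0\<^sub>m (m + n) (m + n))"

lemma iterate_Suc: "iterate (Suc k) = \<Phi> (iterate k)"
  by (simp add: iterate_def)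

lemma iterate_carrier: "iterate k \<in> carrier_mat (m + n) (m + n)"
  by (induction k) (simp_all add: iterate_def \<Phi>_carrier)

lemma frob_norm_iterate_le: "frob_norm (iterate k) \<le> radius"
proof (induction k)
  case 0
  then show ?case
    using radius_nonneg by (simp add: iterate_def frob_norm_def)
next
  case (Suc k)
  then show ?case
    using frob_norm_\<Phi>_le[OF iterate_carrier] by (simp add: iterate_def)
qed

lemma frob_norm_iterate_step_le:
  "frob_norm (iterate (Suc k) - iterate k) \<le> (sqrt 2 * radius) ^ k * radius"
proof (induction k)
  case 0
  have "iterate (Suc 0) - iterate 0 = iterate (Suc 0)"
    using iterate_carrier[of "Suc 0"] by (intro eq_matI) (simp_all add: iterate_def)
  then show ?case
    using frob_norm_iterate_le[of "Suc 0"] by simp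
next
  case (Suc k)
  have "frob_norm (\<Phi> (iterate (Suc k)) - \<Phi> (iterate k))
      \<le> sqrt 2 * radius * frob_norm (iterate (Suc k) - iterate k)"
    by (intro frob_norm_\<Phi>_minus_le iterate_carrier frob_norm_iterate_le)
  then have "frob_norm (iterate (Suc (Suc k)) - iterate (Suc k))
      \<le> sqrt 2 * radius * frob_norm (iterate (Suc k) - iterate k)"
    by (simp only: iterate_Suc)
  also have "\<dots> \<le> sqrt 2 * radius * ((sqrt 2 * radius) ^ k * radius)"
    using Suc.IH radius_nonneg by (intro mult_left_mono) simp_all
  finally show ?case
    by (simp add: mult.assoc)
qed

lemma iterate_index_convergent:
  assumes ij: "i < m + n" "j < m + n"
  shows "convergent (\<lambda>k. iterate k $$ (i,j))"
proof -
  let ?d = "\<lambda>t. iterate (Suc t) $$ (i,j) - iterate t $$ (i,j)"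
  have bound: "norm (?d t) \<le> (sqrt 2 * radius) ^ t * radius" for t
  proof -
    have "?d t = (iterate (Suc t) - iterate t) $$ (i,j)"
      using ij iterate_carrier[of t] by simp
    also have "\<bar>\<dots>\<bar> \<le> frob_norm (iterate (Suc t) - iterate t)"
      using ij iterate_carrier[of t] by (intro abs_index_le_frob_norm) simp_all
    finally show ?thesis
      using frob_norm_iterate_step_le[of t] by simp
  qed
  have "summable (\<lambda>t. (sqrt 2 * radius) ^ t * radius)"
    using radius_nonneg radius_contraction by (intro summable_mult2 summable_geometric) simp
  then have "summable ?d"
    by (rule summable_comparison_test') (rule bound)
  moreover have "(\<Sum>t<k. ?d t) = iterate k $$ (i,j)" for k
    using sum_lessThan_telescope[of "\<lambda>t. iterate t $$ (i,j)" k] ij by (simp add: iterate_def)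
  ultimately show ?thesis
    using summable_LIMSEQ convergent_def by fastforce
qed

lemma tendsto_index_\<Phi>:
  assumes A: "\<And>k. A k \<in> carrier_mat (m + n) (m + n)" and X: "X \<in> carrier_mat (m + n) (m + n)"
    and lim: "\<And>i j. i < m + n \<Longrightarrow> j < m + n \<Longrightarrow> (\<lambda>k. A k $$ (i,j)) \<longlonglongrightarrow> X $$ (i,j)"
    and ij: "i < m + n" "j < m + n"
  shows "(\<lambda>k. \<Phi> (A k) $$ (i,j)) \<longlonglongrightarrow> \<Phi> X $$ (i,j)"
proof -
  define q where "q Y = E $$ (i,j) - (\<Sum>l<m+n. Y $$ (i,l) * Jsig m n $$ (l,l) * Y $$ (j,l))" for Y
  have \<Phi>_index: "\<Phi> Y $$ (i,j) = (if j < i then q Y else if i = j then q Y / 2 else 0)"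
    if "Y \<in> carrier_mat (m + n) (m + n)" for Y
    using that E ij E_minus_product_carrier[OF that]
    by (simp add: \<Phi>_def index_low_part q_def index_Jsig_product[OF that that] del: index_mult_mat(1))
  have "(\<lambda>k. q (A k)) \<longlonglongrightarrow> q X"
    unfolding q_def using ij by (intro tendsto_intros lim) simp_all
  then show ?thesis
    unfolding \<Phi>_index[OF A] \<Phi>_index[OF X] by (auto intro: tendsto_intros)
qed

lemma \<Phi>_fixed_point:
  obtains X where "X \<in> carrier_mat (m + n) (m + n)" "frob_norm X \<le> radius" "\<Phi> X = X"
proof
  define X where "X = mat (m + n) (m + n) (\<lambda>(i,j). lim (\<lambda>k. iterate k $$ (i,j)))"
  show X: "X \<in> carrier_mat (m + n) (m + n)"
    by (simp add: X_def)
  have lim: "(\<lambda>k. iterate k $$ (i,j)) \<longlonglongrightarrow> X $$ (i,j)" if "i < m + n" "j < m + n" for i j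
    using iterate_index_convergent[OF that] that by (simp add: X_def convergent_LIMSEQ_iff)
  have "(\<lambda>k. frob_norm (iterate k)) \<longlonglongrightarrow> frob_norm X"
    by (intro tendsto_frob_norm[OF iterate_carrier X] lim)
  then show "frob_norm X \<le> radius"
    by (rule LIMSEQ_le_const2) (use frob_norm_iterate_le in blast)
  show "\<Phi> X = X"
  proof (rule eq_matI)
    fix i j assume "i < dim_row X" "j < dim_col X"
    then have ij: "i < m + n" "j < m + n"
      using X by simp_all
    have "(\<lambda>k. \<Phi> (iterate k) $$ (i,j)) \<longlonglongrightarrow> \<Phi> X $$ (i,j)"
      by (rule tendsto_index_\<Phi>[OF iterate_carrier X lim ij])
    moreover have "(\<lambda>k. \<Phi> (iterate k) $$ (i,j)) \<longlonglongrightarrow> X $$ (i,j)"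
      using LIMSEQ_Suc[OF lim[OF ij]] by (simp add: iterate_def)
    ultimately show "\<Phi> X $$ (i,j) = X $$ (i,j)"
      by (rule LIMSEQ_unique)
  qed (use X \<Phi>_carrier[OF X] in simp_all)
qed

lemma lower_tri_solution:
  obtains X where "X \<in> carrier_mat (m + n) (m + n)" "lower_tri X" "frob_norm X \<le> radius"
    "X + transpose_mat X + X * Jsig m n * transpose_mat X = E"
proof -
  obtain X where X: "X \<in> carrier_mat (m + n) (m + n)" and "frob_norm X \<le> radius" and fixed: "\<Phi> X = X"
    by (rule \<Phi>_fixed_point)
  let ?Q = "X * Jsig m n * transpose_mat X"
  have Q: "?Q \<in> carrier_mat (m + n) (m + n)"
    by (rule Jsig_product_carrier[OF X X])
  have "X + transpose_mat X = E - ?Q"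
    using low_part_add_transpose[OF sym_mat_E_minus_product[OF X]] fixed by (simp add: \<Phi>_def)
  then have "X + transpose_mat X + ?Q = E - ?Q + ?Q"
    by simp
  also have "\<dots> = E"
    using E Q X by (intro eq_matI) simp_all
  finally have "X + transpose_mat X + ?Q = E" .
  moreover have "lower_tri X"
    using fixed lower_tri_low_part by (metis \<Phi>_def)
  ultimately show thesis
    using X \<open>frob_norm X \<le> radius\<close> that by blast
qed

end

section \<open>Perturbation of generalized Cholesky factors\<close>

lemma index_one_plus_mult_Jsig:
  assumes "X \<in> carrier_mat (m + n) (m + n)" "i < m + n" "j < m + n"
  shows "(1\<^sub>m (m + n) + X * Jsig m n) $$ (i,j) = (if i = j then 1 else 0) + X $$ (i,j) * Jsig m n $$ (j,j)"
  using assms by (simp del: index_mult_mat(1) add: index_mult_Jsig)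

lemma lower_tri_one_plus_mult_Jsig:
  assumes X: "X \<in> carrier_mat (m + n) (m + n)" "lower_tri X"
  shows "lower_tri (1\<^sub>m (m + n) + X * Jsig m n)"
  unfolding lower_tri_def
proof (intro allI impI)
  fix i j assume "i < dim_row (1\<^sub>m (m + n) + X * Jsig m n)" "j < dim_col (1\<^sub>m (m + n) + X * Jsig m n)" "i < j"
  then have ij: "i < m + n" "j < m + n" "i < j"
    by simp_all
  then have "X $$ (i,j) = 0"
    using X unfolding lower_tri_def by simp
  then show "(1\<^sub>m (m + n) + X * Jsig m n) $$ (i,j) = 0"
    using ij by (simp add: index_one_plus_mult_Jsig[OF X(1) ij(1,2)])
qed

lemma Jsig_congruence_one_plus:
  assumes X: "X \<in> carrier_mat (m + n) (m + n)"
    and eq: "X + transpose_mat X + X * Jsig m n * transpose_mat X = E"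
  shows "(1\<^sub>m (m + n) + X * Jsig m n) * Jsig m n * transpose_mat (1\<^sub>m (m + n) + X * Jsig m n)
    = Jsig m n + E"
proof -
  let ?J = "Jsig m n" and ?I = "1\<^sub>m (m + n)"
  have J: "?J \<in> carrier_mat (m + n) (m + n)" and XJ: "X * ?J \<in> carrier_mat (m + n) (m + n)"
    and JXt: "?J * transpose_mat X \<in> carrier_mat (m + n) (m + n)"
    using X by (simp_all add: mult_carrier_mat[of _ _ "m + n"])
  have "(?I + X * ?J) * ?J = ?J + X"
  proof -
    have "(?I + X * ?J) * ?J = ?I * ?J + X * ?J * ?J"
      by (rule add_mult_distrib_mat[OF one_carrier_mat XJ J])
    also have "\<dots> = ?J + X"
      using X by (simp add: assoc_mult_mat[OF X J J])
    finally show ?thesis .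
  qed
  moreover have "transpose_mat (?I + X * ?J) = ?I + ?J * transpose_mat X"
    using transpose_add[OF one_carrier_mat XJ] transpose_mult[OF X J] by simp
  ultimately have "(?I + X * ?J) * ?J * transpose_mat (?I + X * ?J) = (?J + X) * (?I + ?J * transpose_mat X)"
    by simp
  also have "\<dots> = (?J + X) * ?I + (?J + X) * (?J * transpose_mat X)"
    using X by (intro mult_add_distrib_mat[of _ "m + n" "m + n" _ "m + n"] JXt) simp_all
  also have "\<dots> = ?J + X + (?J * (?J * transpose_mat X) + X * (?J * transpose_mat X))"
    using X by (simp add: add_mult_distrib_mat[OF J X JXt])
  also have "?J * (?J * transpose_mat X) = transpose_mat X"
    using assoc_mult_mat[OF J J, of "transpose_mat X" "m + n"] X by simp
  also have "X * (?J * transpose_mat X) = X * ?J * transpose_mat X"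
    using assoc_mult_mat[OF X J, of "transpose_mat X" "m + n"] X by simp
  also have "?J + X + (transpose_mat X + X * ?J * transpose_mat X)
      = ?J + (X + transpose_mat X + X * ?J * transpose_mat X)"
    using X by (intro eq_matI) simp_all
  finally show ?thesis
    unfolding eq .
qed

lemma gen_cholesky_mult_right:
  assumes L: "gen_cholesky m n K L"
    and P: "P \<in> carrier_mat (m + n) (m + n)" "lower_tri P" "\<forall>i<m+n. P $$ (i,i) \<noteq> 0"
    and E: "E \<in> carrier_mat (m + n) (m + n)"
    and PJP: "P * Jsig m n * transpose_mat P = Jsig m n + E"
  shows "gen_cholesky m n (K + L * E * transpose_mat L) (L * P)"
proof -
  let ?C = "carrier_mat (m + n) (m + n)" and ?J = "Jsig m n"
  have Lc: "L \<in> ?C" and "lower_tri L" and "\<forall>i<m+n. L $$ (i,i) \<noteq> 0" and K: "K = L * ?J * transpose_mat L"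
    using L by (simp_all add: gen_cholesky_iff)
  have mult: "A * B \<in> ?C" if "A \<in> ?C" "B \<in> ?C" for A B
    using that by simp
  have assoc: "A * B * D = A * (B * D)" if "A \<in> ?C" "B \<in> ?C" "D \<in> ?C" for A B D
    using that by (rule assoc_mult_mat)
  have "L * P * ?J * transpose_mat (L * P) = L * (P * ?J * transpose_mat P) * transpose_mat L"
    using Lc P(1) by (simp add: transpose_mult[OF Lc P(1)] mult assoc)
  also have "\<dots> = (L * ?J + L * E) * transpose_mat L"
    unfolding PJP by (simp add: mult_add_distrib_mat[OF Lc Jsig_carrier E])
  also have "\<dots> = L * ?J * transpose_mat L + L * E * transpose_mat L"
    using Lc E by (intro add_mult_distrib_mat[of _ "m + n" "m + n"] mult) simp_all
  finally have "K + L * E * transpose_mat L = L * P * ?J * transpose_mat (L * P)"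
    by (simp add: K)
  moreover have "lower_tri (L * P)"
    using Lc P \<open>lower_tri L\<close> by (simp add: lower_tri_mult)
  moreover have "\<forall>i<m+n. (L * P) $$ (i,i) \<noteq> 0"
    using diag_mult_lower_tri[OF Lc \<open>lower_tri L\<close> P(1,2)] P(3) \<open>\<forall>i<m+n. L $$ (i,i) \<noteq> 0\<close>
    by (simp del: index_mult_mat(1))
  ultimately show ?thesis
    using Lc P(1) by (simp add: gen_cholesky_iff)
qed

lemma gen_cholesky_one_plus_mult_Jsig:
  assumes L: "gen_cholesky m n K L"
    and X: "X \<in> carrier_mat (m + n) (m + n)" "lower_tri X" "\<forall>i<m+n. \<bar>X $$ (i,i)\<bar> < 1"
    and eq: "X + transpose_mat X + X * Jsig m n * transpose_mat X = E"
  shows "gen_cholesky m n (K + L * E * transpose_mat L) (L * (1\<^sub>m (m + n) + X * Jsig m n))"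
proof (rule gen_cholesky_mult_right[OF L _ lower_tri_one_plus_mult_Jsig[OF X(1,2)]])
  show "1\<^sub>m (m + n) + X * Jsig m n \<in> carrier_mat (m + n) (m + n)"
    using X(1) by (simp add: mult_carrier_mat[of _ _ "m + n"])
  show "E \<in> carrier_mat (m + n) (m + n)"
    using X(1) eq[symmetric] by (simp add: Jsig_product_carrier)
  show "\<forall>i<m+n. (1\<^sub>m (m + n) + X * Jsig m n) $$ (i,i) \<noteq> 0"
  proof (intro allI impI notI)
    fix i assume i: "i < m + n" and "(1\<^sub>m (m + n) + X * Jsig m n) $$ (i,i) = 0"
    then have "X $$ (i,i) * Jsig m n $$ (i,i) = -1"
      by (simp add: index_one_plus_mult_Jsig[OF X(1) i i])
    then have "\<bar>X $$ (i,i)\<bar> * \<bar>Jsig m n $$ (i,i)\<bar> = 1"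
      by (metis abs_minus_cancel abs_mult abs_one)
    then show False
      using abs_Jsig_diag[OF i] X(3)[rule_format, OF i] by simp
  qed
qed (rule Jsig_congruence_one_plus[OF X(1) eq])

lemma congruence_cancel:
  fixes L M D :: "real mat"
  assumes "L \<in> carrier_mat k k" "M \<in> carrier_mat k k" "D \<in> carrier_mat k k" and "L * M = 1\<^sub>m k"
  shows "L * (M * D * transpose_mat M) * transpose_mat L = D"
proof -
  have mult: "A * B \<in> carrier_mat k k" if "A \<in> carrier_mat k k" "B \<in> carrier_mat k k" for A B
    using that by simp
  have assoc: "A * B * C = A * (B * C)"
    if "A \<in> carrier_mat k k" "B \<in> carrier_mat k k" "C \<in> carrier_mat k k" for A B C
    using that by (rule assoc_mult_mat)
  have "L * (M * D * transpose_mat M) * transpose_mat L = L * M * D * transpose_mat (L * M)"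
    using assms(1-3) by (simp add: transpose_mult[OF assms(1,2)] mult assoc)
  then show ?thesis
    using assms(3,4) by simp
qed

theorem gen_cholesky_perturbation:
  assumes L: "gen_cholesky m n K L"
    and dK: "\<Delta>K \<in> carrier_mat (m + n) (m + n)" "sym_mat \<Delta>K"
    and small: "(spec_norm (mat_inv L))\<^sup>2 * frob_norm \<Delta>K < 1 / 2"
  shows "\<exists>\<Delta>L \<in> carrier_mat (m + n) (m + n).
           gen_cholesky m n (K + \<Delta>K) (L + \<Delta>L) \<and>
           frob_norm (mat_inv L * \<Delta>L)
             \<le> (1 / sqrt 2) * (1 - sqrt (1 - 2 * (spec_norm (mat_inv L))\<^sup>2 * frob_norm \<Delta>K))"
proof -
  let ?J = "Jsig m n" and ?I = "1\<^sub>m (m + n)" and ?\<epsilon> = "(spec_norm (mat_inv L))\<^sup>2 * frob_norm \<Delta>K"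
  have Lc: "L \<in> carrier_mat (m + n) (m + n)" and "lower_tri L" and "\<forall>i<m+n. L $$ (i,i) \<noteq> 0"
    using L by (simp_all add: gen_cholesky_iff)
  then have "invertible_mat L"
    by (simp add: invertible_lower_tri_iff)
  define M where "M = mat_inv L"
  have M: "M \<in> carrier_mat (m + n) (m + n)" "L * M = ?I" "M * L = ?I"
    unfolding M_def using mat_inv[OF Lc \<open>invertible_mat L\<close>] by simp_all
  define E where "E = M * \<Delta>K * transpose_mat M"
  interpret low_part_fixed_point m n E ?\<epsilon>
  proof
    show "E \<in> carrier_mat (m + n) (m + n)"
      unfolding E_def using M(1) dK(1) by (intro mult_carrier_mat[of _ _ "m + n"]) simp_all
    show "sym_mat E"
      unfolding E_def using M(1) dK by (intro sym_mat_congruence) (simp_all add: sym_mat_def)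
    show "frob_norm E \<le> ?\<epsilon>"
      unfolding E_def M_def using frob_norm_congruence_le M(1) dK(1) by (simp add: M_def)
  qed (rule small)
  obtain X where X: "X \<in> carrier_mat (m + n) (m + n)" "lower_tri X" "frob_norm X \<le> radius"
    and eq: "X + transpose_mat X + X * ?J * transpose_mat X = E"
    by (rule lower_tri_solution)
  have XJ: "X * ?J \<in> carrier_mat (m + n) (m + n)"
    using X(1) by (simp add: mult_carrier_mat[of _ _ "m + n"])
  have "\<forall>i<m+n. \<bar>X $$ (i,i)\<bar> < 1"
  proof (intro allI impI)
    fix i assume "i < m + n"
    then have "\<bar>X $$ (i,i)\<bar> \<le> frob_norm X"
      using X(1) by (intro abs_index_le_frob_norm) simp_all
    then show "\<bar>X $$ (i,i)\<bar> < 1"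
      using X(3) radius_less_one by linarith
  qed
  then have "gen_cholesky m n (K + L * E * transpose_mat L) (L * (?I + X * ?J))"
    by (rule gen_cholesky_one_plus_mult_Jsig[OF L X(1,2) _ eq])
  moreover have "L * E * transpose_mat L = \<Delta>K"
    unfolding E_def by (rule congruence_cancel[OF Lc M(1) dK(1) M(2)])
  moreover have "L * (?I + X * ?J) = L + L * (X * ?J)"
    using Lc XJ by (simp add: mult_add_distrib_mat[OF Lc one_carrier_mat])
  moreover have "M * (L * (X * ?J)) = X * ?J"
    using assoc_mult_mat[OF M(1) Lc XJ] M(3) left_mult_one_mat[OF XJ] by simp
  moreover have "frob_norm (X * ?J)
      \<le> (1 / sqrt 2) * (1 - sqrt (1 - 2 * (spec_norm (mat_inv L))\<^sup>2 * frob_norm \<Delta>K))"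
    using X(1,3) by (simp add: frob_norm_mult_Jsig radius_def mult.assoc)
  ultimately show ?thesis
    using Lc XJ unfolding M_def by (intro bexI[of _ "L * (X * ?J)"]) simp_all
qed

text \<open>The saddle-point structure of K only ensures that the factor L exists; the bound holds for
  every generalized Cholesky factorization.\<close>
theorem mainTheorem2:
  fixes m n :: nat and A B C L \<Delta>K :: "real mat"
  assumes A: "A \<in> carrier_mat m m" "pos_def_mat A"
    and B: "B \<in> carrier_mat n m" "mat_rank B = n"
    and C: "C \<in> carrier_mat n n" "pos_semidef_mat C"
    and L: "gen_cholesky m n (four_block_mat A (transpose_mat B) B (- C)) L"
    and dK: "\<Delta>K \<in> carrier_mat (m+n) (m+n)" "sym_mat \<Delta>K"
    and small: "(spec_norm (mat_inv L))\<^sup>2 * frob_norm \<Delta>K < 1/2"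
  shows "\<exists>\<Delta>L \<in> carrier_mat (m+n) (m+n).
           gen_cholesky m n (four_block_mat A (transpose_mat B) B (- C) + \<Delta>K) (L + \<Delta>L) \<and>
           frob_norm (mat_inv L * \<Delta>L)
             \<le> (1 / sqrt 2) * (1 - sqrt (1 - 2 * (spec_norm (mat_inv L))\<^sup>2 * frob_norm \<Delta>K))"
  by (rule gen_cholesky_perturbation[OF L dK small])

end
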